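(* In $\mathcal H_{n,r}$ we have (1) $g_ig_j=g_jg_i$ for $1\le i,j\le n-1$ with $|i-j|>1$, and (2) $g_ig_{i+1}g_i=g_{i+1}g_ig_{i+1}$ for $1\le i\le n-2$.
   Context: Standing setup: $R$ is an integral domain, $n\ge 2$, $r\ge 1$, and $q,u_1,\ldots,u_r\in R$ with $q$ invertible in $R$ and $\Delta:=\prod_{1\le j<i\le r}(u_i-u_j)$ invertible in $R$. For $1\le c\le r$ let $F_c(X)\in R[X]$ be the unique polynomial of degree $\le r-1$ with $F_c(u_{c'})=\delta_{c,c'}\Delta$ for all $1\le c'\le r$. The modified Ariki–Koike (Shoji) algebra $\mathcal H_{n,r}=\mathcal H_{n,r}(R,q,u_1,\ldots,u_r)$ is the associative $R$-algebra generated by $t_1,\ldots,t_n,T_1,\ldots,T_{n-1}$ subject to: $(T_i-q)(T_i+q^{-1})=0$; $(t_i-u_1)\cdots(t_i-u_r)=0$; $T_iT_{i+1}T_i=T_{i+1}T_iT_{i+1}$; $T_iT_j=T_jT_i$ for $|i-j|\ge2$; $t_it_j=t_jt_i$; $T_jt_k=t_kT_j$ for $k\ne j,j+1$; and for $2\le j\le n$: $T_{j-1}t_j=t_{j-1}T_{j-1}+\Delta^{-2}\sum_{1\le c_1<c_2\le r}(u_{c_2}-u_{c_1})(q-q^{-1})F_{c_1}(t_{j-1})F_{c_2}(t_j)$ and $T_{j-1}t_{j-1}=t_jT_{j-1}-\Delta^{-2}\sum_{1\le c_1<c_2\le r}(u_{c_2}-u_{c_1})(q-q^{-1})F_{c_1}(t_{j-1})F_{c_2}(t_j)$.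 Write $[1,r]=\{1,\ldots,r\}$; for $\mathbf k=(k_1,\ldots,k_n)\in[1,r]^n$ set $b_{\mathbf k}:=\prod_{i=1}^n\prod_{1\le j\le r,\,j\ne k_i}\frac{t_i-u_j}{u_{k_i}-u_j}$. For $1\le i,j\le n$ let $B'_{i,j}:=-(q-q^{-1})\sum_{\mathbf k\in[1,r]^n,\ k_i<k_j}b_{\mathbf k}$, and for $1\le i\le n-1$ let $g_i:=T_i+B'_{i,i+1}$. *)

theory Defs
  imports "HOL-Computational_Algebra.Polynomial" "HOL-Library.FuncSet"
begin

text \<open>An algebra over a commutative ring R is modelled as a ring A (type class ring_1)
  together with a ring homomorphism phi from R into the centre of A (structure map).\<close>

definition alg_struct :: "('r::comm_ring_1 \<Rightarrow> 'a::ring_1) \<Rightarrow> bool" where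
  "alg_struct phi \<longleftrightarrow> phi 1 = 1 \<and> (\<forall>x y. phi (x + y) = phi x + phi y)
     \<and> (\<forall>x y. phi (x * y) = phi x * phi y) \<and> (\<forall>x a. phi x * a = a * phi x)"

definition rinv :: "'r::comm_ring_1 \<Rightarrow> 'r" where
  "rinv x = (THE y. x * y = 1)"

definition invertible_R :: "'r::comm_ring_1 \<Rightarrow> bool" where
  "invertible_R x \<longleftrightarrow> (\<exists>y. x * y = 1)"

definition Delta :: "nat \<Rightarrow> (nat \<Rightarrow> 'r::comm_ring_1) \<Rightarrow> 'r" where
  "Delta r u = (\<Prod>i\<in>{1..r}. \<Prod>j\<in>{1..<i}. (u i - u j))"

definition Fpoly :: "nat \<Rightarrow> (nat \<Rightarrow> 'r::comm_ring_1) \<Rightarrow> nat \<Rightarrow> 'r poly" where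
  "Fpoly r u c = (THE p. degree p \<le> r - 1 \<and>
      (\<forall>c'\<in>{1..r}. poly p (u c') = (if c = c' then Delta r u else 0)))"

definition peval :: "('r::comm_ring_1 \<Rightarrow> 'a::ring_1) \<Rightarrow> 'r poly \<Rightarrow> 'a \<Rightarrow> 'a" where
  "peval phi p x = (\<Sum>k\<le>degree p. phi (coeff p k) * x ^ k)"

definition corr :: "('r::comm_ring_1 \<Rightarrow> 'a::ring_1) \<Rightarrow> nat \<Rightarrow> 'r \<Rightarrow> (nat \<Rightarrow> 'r)
     \<Rightarrow> (nat \<Rightarrow> 'a) \<Rightarrow> nat \<Rightarrow> 'a" where
  "corr phi r q u t j = (\<Sum>c1\<in>{1..r}. \<Sum>c2\<in>{c1<..r}.
      phi (rinv ((Delta r u)^2) * (u c2 - u c1) * (q - rinv q))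
      * peval phi (Fpoly r u c1) (t (j - 1)) * peval phi (Fpoly r u c2) (t j))"

text \<open>Defining relations of the modified Ariki-Koike (Shoji) algebra H_{n,r}, for
  elements t_1..t_n, T_1..T_{n-1} of an R-algebra (A, phi).\<close>
definition shoji_rels :: "('r::comm_ring_1 \<Rightarrow> 'a::ring_1) \<Rightarrow> nat \<Rightarrow> nat \<Rightarrow> 'r
     \<Rightarrow> (nat \<Rightarrow> 'r) \<Rightarrow> (nat \<Rightarrow> 'a) \<Rightarrow> (nat \<Rightarrow> 'a) \<Rightarrow> bool" where
  "shoji_rels phi n r q u t T \<longleftrightarrow>
     (\<forall>i\<in>{1..n-1}. (T i - phi q) * (T i + phi (rinv q)) = 0)
   \<and> (\<forall>i\<in>{1..n}. prod_list (map (\<lambda>c. t i - phi (u c)) [1..<r+1]) = 0)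
   \<and> (\<forall>i\<in>{1..n-2}. T i * T (i+1) * T i = T (i+1) * T i * T (i+1))
   \<and> (\<forall>i\<in>{1..n-1}. \<forall>j\<in>{1..n-1}. (i > j + 1 \<or> j > i + 1) \<longrightarrow> T i * T j = T j * T i)
   \<and> (\<forall>i\<in>{1..n}. \<forall>j\<in>{1..n}. t i * t j = t j * t i)
   \<and> (\<forall>j\<in>{1..n-1}. \<forall>k\<in>{1..n}. k \<noteq> j \<and> k \<noteq> j + 1 \<longrightarrow> T j * t k = t k * T j)
   \<and> (\<forall>j\<in>{2..n}. T (j-1) * t j = t (j-1) * T (j-1) + corr phi r q u t j)
   \<and> (\<forall>j\<in>{2..n}. T (j-1) * t (j-1) = t j * T (j-1) - corr phi r q u t j)"

text \<open>b_k = prod_i prod_{j ~= k_i} (t_i - u_j)/(u_{k_i} - u_j)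
  (factors commute by the relations; an ordered product is taken).\<close>
definition bk :: "('r::comm_ring_1 \<Rightarrow> 'a::ring_1) \<Rightarrow> nat \<Rightarrow> nat \<Rightarrow> (nat \<Rightarrow> 'r)
     \<Rightarrow> (nat \<Rightarrow> 'a) \<Rightarrow> (nat \<Rightarrow> nat) \<Rightarrow> 'a" where
  "bk phi n r u t k = prod_list (map (\<lambda>i. prod_list (map
      (\<lambda>j. (t i - phi (u j)) * phi (rinv (u (k i) - u j)))
      (filter (\<lambda>j. j \<noteq> k i) [1..<r+1]))) [1..<n+1])"

definition Bp :: "('r::comm_ring_1 \<Rightarrow> 'a::ring_1) \<Rightarrow> nat \<Rightarrow> nat \<Rightarrow> 'r \<Rightarrow> (nat \<Rightarrow> 'r)
     \<Rightarrow> (nat \<Rightarrow> 'a) \<Rightarrow> nat \<Rightarrow> nat \<Rightarrow> 'a" where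
  "Bp phi n r q u t i j = phi (- (q - rinv q)) *
     (\<Sum>k\<in>{k\<in>PiE {1..n} (\<lambda>_. {1..r}). k i < k j}. bk phi n r u t k)"

definition gen :: "('r::comm_ring_1 \<Rightarrow> 'a::ring_1) \<Rightarrow> nat \<Rightarrow> nat \<Rightarrow> 'r \<Rightarrow> (nat \<Rightarrow> 'r)
     \<Rightarrow> (nat \<Rightarrow> 'a) \<Rightarrow> (nat \<Rightarrow> 'a) \<Rightarrow> nat \<Rightarrow> 'a" where
  "gen phi n r q u t T i = T i + Bp phi n r q u t i (i + 1)"

end

(*
  The t_i commute and each is annihilated by (X - u_1)...(X - u_r), whose roots have invertible
  differences; Lagrange interpolation therefore yields orthogonal idempotents b_k, k in [1,r]^n,
  summing to 1, with t_i b_k = u_(k_i) b_k.  On b_k the correction B'_(i,i+1) is the scalar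
  -(q - q^-1)[k_i < k_(i+1)], and this exactly absorbs the correction terms of the mixed relations:
  g_i t_(i+1) = t_i g_i and g_i t_i = t_(i+1) g_i.  Hence g_i b_k = b_(s_i k) g_i, and
  T_i b_k = g_i b_k + (q - q^-1)[k_i < k_(i+1)] b_k.  Substituting this into the commutation and
  braid relations of the T_i and comparing both sides on every block b_k gives the relations of
  the g_i.
*)

theory Submission
  imports Defs "HOL-Combinatorics.Transposition"
begin

lemma rinv_unique:
  fixes x :: "'r::idom"
  assumes "x * y = 1"
  shows "rinv x = y"
  unfolding rinv_def
proof (rule the_equality)
  fix z assume "x * z = 1"
  with assms have "x * z = x * y" "x \<noteq> 0" by auto
  then show "z = y" by simp
qed (fact assms)

lemma mult_rinv:
  fixes x :: "'r::idom"
  assumes "x dvd 1"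
  shows "x * rinv x = 1"
  using assms rinv_unique by (metis dvdE)

lemma mult_prod_list_commute:
  fixes z :: "'a::monoid_mult"
  assumes "\<And>y. y \<in> set ys \<Longrightarrow> z * y = y * z"
  shows "z * prod_list ys = prod_list ys * z"
  using assms
proof (induction ys)
  case (Cons y ys)
  have "z * prod_list (y # ys) = y * (z * prod_list ys)"
    using Cons.prems[of y] by (simp flip: mult.assoc)
  also have "\<dots> = y * (prod_list ys * z)"
    using Cons by simp
  also have "\<dots> = prod_list (y # ys) * z"
    using Cons by (simp add: mult.assoc)
  finally show ?case .
qed simp

lemma mult_sum_commute:
  fixes z :: "'a::semiring_0"
  assumes "\<And>x. x \<in> A \<Longrightarrow> z * f x = f x * z"
  shows "z * sum f A = sum f A * z"
  using assms by (simp add: sum_distrib_left sum_distrib_right)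

lemma upt_split_adjacent:
  assumes "1 \<le> i" "i + 1 \<le> n"
  shows "[1..<n+1] = [1..<i] @ [i, i+1] @ [i+2..<n+1]"
proof -
  have "[1..<n+1] = [1..<i] @ [i..<n+1]" using assms upt_add_eq_append[of 1 i "n+1-i"] by simp
  also have "[i..<n+1] = i # (i+1) # [i+2..<n+1]" using assms by (simp add: upt_conv_Cons)
  finally show ?thesis by simp
qed

text \<open>The two sides of the hypothesis are the expansions of \<open>T_i T_(i+1) T_i b_k\<close> and
  \<open>T_(i+1) T_i T_(i+1) b_k\<close> in terms of \<open>x = g_i\<close>, \<open>y = g_(i+1)\<close>, \<open>z = b_k\<close>, where
  \<open>a, b, c = k_i, k_(i+1), k_(i+2)\<close>; for every relative order of \<open>a, b, c\<close> the correction
  terms cancel.\<close>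

lemma braid_expansion_cancel:
  fixes x y z lam :: "'a::ring_1" and a b c :: nat
  assumes "x * (y * (x * z)) + (if b < c then lam else 0) * (y * (x * z))
       + (if a < c then lam else 0) * ((if a = b then lam else 0) * (x * z) + z + (if b < a then lam else 0) * (x * z))
       + ((if a < b then lam else 0) * (x * (y * z) + (if a < c then lam else 0) * (y * z))
       + (if a < b then lam else 0) * ((if b < c then lam else 0) * (x * z + (if a < b then lam else 0) * z)))
     = y * (x * (y * z)) + (if a < b then lam else 0) * (x * (y * z))
       + (if a < c then lam else 0) * ((if b = c then lam else 0) * (y * z) + z + (if c < b then lam else 0) * (y * z))
       + ((if b < c then lam else 0) * (y * (x * z) + (if a < c then lam else 0) * (x * z))
       + (if b < c then lam else 0) * ((if a < b then lam else 0) * (y * z + (if b < c then lam else 0) * z)))"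
  shows "x * (y * (x * z)) - y * (x * (y * z)) = 0"
proof -
  have "(A::'a) + B = C + D \<Longrightarrow> A - C = D - B" for A B C D
    by (simp add: algebra_simps)
  from this[OF assms[unfolded add.assoc]] show ?thesis
    by (cases "a < b"; cases "b < a"; cases "b < c"; cases "c < b"; cases "a < c")
      (simp_all add: algebra_simps)
qed

subsection \<open>Lagrange interpolation at the parameters \<open>u\<^sub>1, \<dots>, u\<^sub>r\<close>\<close>

definition lagrange_basis :: "nat \<Rightarrow> (nat \<Rightarrow> 'r::idom) \<Rightarrow> nat \<Rightarrow> 'r poly" where
  "lagrange_basis r u c = (\<Prod>j\<in>{1..r} - {c}. smult (rinv (u c - u j)) [:- u j, 1:])"

lemma Delta_dvd_one_imp_diff_dvd_one:
  fixes u :: "nat \<Rightarrow> 'r::idom"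
  assumes "Delta r u dvd 1" "i \<in> {1..r}" "j \<in> {1..r}" "i \<noteq> j"
  shows "(u i - u j) dvd 1"
proof -
  have lower: "(u a - u b) dvd 1" if "a \<in> {1..r}" "b \<in> {1..<a}" for a b
  proof -
    have "(u a - u b) dvd (\<Prod>j\<in>{1..<a}. u a - u j)" using that by (intro dvd_prodI) auto
    also have "\<dots> dvd Delta r u" unfolding Delta_def using that by (intro dvd_prodI) auto
    finally show ?thesis using assms(1) by (rule dvd_trans)
  qed
  show ?thesis
  proof (cases "j < i")
    case False
    with assms have "(u j - u i) dvd 1" by (intro lower) auto
    then show ?thesis by (metis minus_diff_eq minus_dvd_iff)
  qed (use assms lower in auto)
qed

lemma inj_on_nodes:
  fixes u :: "nat \<Rightarrow> 'r::idom"
  assumes "Delta r u dvd 1"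
  shows "inj_on u {1..r}"
  by (rule inj_onI) (metis assms Delta_dvd_one_imp_diff_dvd_one diff_self dvd_0_left_iff zero_neq_one)

lemma poly_eq_on_nodes:
  fixes u :: "nat \<Rightarrow> 'r::idom"
  assumes "Delta r u dvd 1" "r \<ge> 1" "degree p \<le> r - 1" "degree p' \<le> r - 1"
    and "\<And>e. e \<in> {1..r} \<Longrightarrow> poly p (u e) = poly p' (u e)"
  shows "p = p'"
proof (rule poly_eqI_degree[where A = "u ` {1..r}"])
  have "card (u ` {1..r}) = r" using inj_on_nodes[OF assms(1)] by (simp add: card_image)
  then show "degree p < card (u ` {1..r})" "degree p' < card (u ` {1..r})" using assms(2-4) by linarith+
qed (use assms(5) in auto)

lemma poly_lagrange_basis:
  fixes u :: "nat \<Rightarrow> 'r::idom"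
  assumes "Delta r u dvd 1" "c \<in> {1..r}" "e \<in> {1..r}"
  shows "poly (lagrange_basis r u c) (u e) = (if e = c then 1 else 0)"
proof (cases "e = c")
  case True
  have "poly (smult (rinv (u c - u j)) [:- u j, 1:]) (u c) = 1" if "j \<in> {1..r} - {c}" for j
  proof -
    have "(u c - u j) * rinv (u c - u j) = 1"
      using that assms by (intro mult_rinv Delta_dvd_one_imp_diff_dvd_one) auto
    then show ?thesis by (simp add: algebra_simps)
  qed
  then show ?thesis using True unfolding lagrange_basis_def poly_prod
    by (auto intro!: prod.neutral)
qed (use assms in \<open>auto simp: lagrange_basis_def poly_prod\<close>)

lemma degree_lagrange_basis:
  assumes "c \<in> {1..r}"
  shows "degree (lagrange_basis r u c) \<le> r - 1"
proof -
  have "degree (lagrange_basis r u c) \<le> (\<Sum>j\<in>{1..r} - {c}. degree (smult (rinv (u c - u j)) [:- u j, 1:]))"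
    unfolding lagrange_basis_def by (rule order_trans[OF degree_prod_sum_le]) auto
  also have "\<dots> \<le> (\<Sum>j\<in>{1..r} - {c}. 1)"
    by (intro sum_mono order_trans[OF degree_smult_le]) simp
  finally show ?thesis using assms by simp
qed

lemma sum_lagrange_basis:
  fixes u :: "nat \<Rightarrow> 'r::idom"
  assumes "Delta r u dvd 1" "r \<ge> 1"
  shows "(\<Sum>c\<in>{1..r}. lagrange_basis r u c) = 1"
proof (rule poly_eq_on_nodes[OF assms])
  show "degree (\<Sum>c\<in>{1..r}. lagrange_basis r u c) \<le> r - 1"
    by (intro degree_sum_le degree_lagrange_basis) auto
  fix e assume "e \<in> {1..r}"
  then show "poly (\<Sum>c\<in>{1..r}. lagrange_basis r u c) (u e) = poly 1 (u e)"
    using assms(1) by (simp add: poly_sum poly_lagrange_basis)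
qed simp

lemma Fpoly_eq_smult_lagrange_basis:
  fixes u :: "nat \<Rightarrow> 'r::idom"
  assumes "Delta r u dvd 1" "c \<in> {1..r}"
  shows "Fpoly r u c = smult (Delta r u) (lagrange_basis r u c)"
  unfolding Fpoly_def
proof (rule the_equality)
  have deg: "degree (smult (Delta r u) (lagrange_basis r u c)) \<le> r - 1"
    using order_trans[OF degree_smult_le degree_lagrange_basis[OF assms(2)]] .
  then show "degree (smult (Delta r u) (lagrange_basis r u c)) \<le> r - 1 \<and>
      (\<forall>c'\<in>{1..r}. poly (smult (Delta r u) (lagrange_basis r u c)) (u c') = (if c = c' then Delta r u else 0))"
    using assms by (auto simp: poly_lagrange_basis)
  fix p assume p: "degree p \<le> r - 1 \<and> (\<forall>c'\<in>{1..r}. poly p (u c') = (if c = c' then Delta r u else 0))"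
  show "p = smult (Delta r u) (lagrange_basis r u c)"
    using p assms deg
    by (intro poly_eq_on_nodes[OF assms(1)]) (auto simp: poly_lagrange_basis)
qed

lemma linear_factor_mult_lagrange_basis:
  assumes "c \<in> {1..r}"
  shows "[:- u c, 1:] * lagrange_basis r u c
    = smult (\<Prod>j\<in>{1..r} - {c}. rinv (u c - u j)) (\<Prod>j\<in>{1..r}. [:- u j, 1:])"
proof -
  have "(\<Prod>j\<in>{1..r}. [:- u j, 1:]) = [:- u c, 1:] * (\<Prod>j\<in>{1..r} - {c}. [:- u j, 1:])"
    using assms by (intro prod.remove) auto
  then show ?thesis by (simp only: lagrange_basis_def prod_smult mult_smult_right)
qed

subsection \<open>Evaluating polynomials in an algebra\<close>

locale algebra_map =
  fixes phi :: "'r::comm_ring_1 \<Rightarrow> 'a::ring_1"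
  assumes alg_struct: "alg_struct phi"
begin

lemma phi_1 [simp]: "phi 1 = 1"
  and phi_add: "phi (x + y) = phi x + phi y"
  and phi_mult: "phi (x * y) = phi x * phi y"
  and phi_commute: "phi x * z = z * phi x"
  using alg_struct unfolding alg_struct_def by blast+

lemma phi_0 [simp]: "phi 0 = 0"
  using phi_add[of 0 0] by simp

lemma phi_minus: "phi (- x) = - phi x"
  using phi_add[of x "- x"] by (simp add: eq_neg_iff_add_eq_0 add.commute)

lemma phi_diff: "phi (x - y) = phi x - phi y"
  using phi_add[of x "- y"] by (simp add: phi_minus)

lemma mult_phi_left_commute: "z * (phi x * w) = phi x * (z * w)"
  by (metis mult.assoc phi_commute)

lemma peval_eq_sum_lessThan:
  "degree p < N \<Longrightarrow> peval phi p x = (\<Sum>k<N. phi (coeff p k) * x ^ k)"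
  unfolding peval_def by (rule sum.mono_neutral_left) (auto simp: coeff_eq_0)

lemma peval_0 [simp]: "peval phi 0 x = 0"
  by (simp add: peval_def)

lemma peval_add: "peval phi (p + p') x = peval phi p x + peval phi p' x"
proof -
  define N where "N = Suc (degree p + degree p')"
  have "degree (p + p') < N" "degree p < N" "degree p' < N"
    using degree_add_le_max[of p p'] unfolding N_def by linarith+
  then show ?thesis by (simp add: peval_eq_sum_lessThan[of _ N] phi_add distrib_right sum.distrib)
qed

lemma peval_smult: "peval phi (smult a p) x = phi a * peval phi p x"
proof -
  have "degree (smult a p) < Suc (degree p)" "degree p < Suc (degree p)"
    using degree_smult_le[of a p] by auto
  then show ?thesis
    by (simp only: peval_eq_sum_lessThan coeff_smult phi_mult sum_distrib_left mult.assoc)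
qed

lemma peval_pCons: "peval phi (pCons a p) x = phi a + x * peval phi p x"
proof -
  define N where "N = Suc (degree p)"
  have "degree (pCons a p) < Suc N" using degree_pCons_le[of a p] unfolding N_def by linarith
  then have "peval phi (pCons a p) x = phi a + (\<Sum>k<N. phi (coeff p k) * x ^ Suc k)"
    by (simp only: peval_eq_sum_lessThan sum.lessThan_Suc_shift coeff_pCons_0 coeff_pCons_Suc
        power_0 mult_1_right)
  also have "(\<Sum>k<N. phi (coeff p k) * x ^ Suc k) = x * (\<Sum>k<N. phi (coeff p k) * x ^ k)"
    unfolding sum_distrib_left by (intro sum.cong refl) (metis mult.assoc phi_commute power_Suc)
  finally show ?thesis by (simp add: peval_eq_sum_lessThan[of p N] N_def)
qed

lemma peval_1 [simp]: "peval phi 1 x = 1"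
  by (simp add: one_pCons peval_pCons)

lemma peval_linear: "peval phi [:- a, 1:] x = x - phi a"
  by (simp add: peval_pCons phi_minus)

lemma peval_mult: "peval phi (p * p') x = peval phi p x * peval phi p' x"
proof (induction p rule: pCons_induct)
  case (pCons a p)
  have "pCons a p * p' = smult a p' + pCons 0 (p * p')" by simp
  then show ?case
    by (simp add: peval_add peval_smult peval_pCons pCons.IH distrib_right mult.assoc)
qed simp

lemma peval_sum: "peval phi (sum f A) x = (\<Sum>a\<in>A. peval phi (f a) x)"
  by (induction A rule: infinite_finite_induct) (auto simp: peval_add)

lemma peval_prod_list: "peval phi (prod_list (map f xs)) x = prod_list (map (\<lambda>a. peval phi (f a) x) xs)"
  by (induction xs) (auto simp: peval_mult)

lemma peval_intertwine:
  assumes "z * x = y * z"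
  shows "z * peval phi p x = peval phi p y * z"
proof (induction p rule: pCons_induct)
  case (pCons a p)
  have "z * (x * peval phi p x) = y * (z * peval phi p x)"
    by (simp add: assms flip: mult.assoc)
  also have "\<dots> = y * peval phi p y * z"
    by (simp add: pCons.IH mult.assoc)
  finally show ?case
    by (simp add: peval_pCons distrib_left distrib_right phi_commute[of a z])
qed simp

lemma peval_eigen:
  assumes "x * e = phi a * e"
  shows "peval phi p x * e = phi (poly p a) * e"
proof (induction p rule: pCons_induct)
  case (pCons b p)
  have "x * peval phi p x * e = phi (poly p a) * (x * e)"
    by (simp only: mult.assoc pCons.IH mult_phi_left_commute)
  also have "\<dots> = phi (a * poly p a) * e"
    by (simp only: assms phi_mult mult.commute[of a] mult.assoc)
  finally show ?case by (simp add: peval_pCons distrib_right phi_add)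
qed simp

end

subsection \<open>The joint eigenspaces of the \<open>t_i\<close>\<close>

locale shoji_algebra = algebra_map phi for phi :: "'r::idom \<Rightarrow> 'a::ring_1" +
  fixes n r :: nat and q :: 'r and u :: "nat \<Rightarrow> 'r" and t T :: "nat \<Rightarrow> 'a"
  assumes r_ge_1: "r \<ge> 1"
    and q_invertible: "invertible_R q"
    and Delta_invertible: "invertible_R (Delta r u)"
    and relations: "shoji_rels phi n r q u t T"
begin

lemma T_quadratic: "i \<in> {1..n-1} \<Longrightarrow> (T i - phi q) * (T i + phi (rinv q)) = 0"
  and t_annihilated: "i \<in> {1..n} \<Longrightarrow> prod_list (map (\<lambda>c. t i - phi (u c)) [1..<r+1]) = 0"
  and T_braid: "i \<in> {1..n-2} \<Longrightarrow> T i * T (i+1) * T i = T (i+1) * T i * T (i+1)"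
  and T_far_commute:
    "\<lbrakk>i \<in> {1..n-1}; j \<in> {1..n-1}; i > j + 1 \<or> j > i + 1\<rbrakk> \<Longrightarrow> T i * T j = T j * T i"
  and t_commute: "\<lbrakk>i \<in> {1..n}; j \<in> {1..n}\<rbrakk> \<Longrightarrow> t i * t j = t j * t i"
  and T_t_commute: "\<lbrakk>i \<in> {1..n-1}; m \<in> {1..n}; m \<noteq> i; m \<noteq> i + 1\<rbrakk> \<Longrightarrow> T i * t m = t m * T i"
  using relations unfolding shoji_rels_def by blast+

lemma T_t_succ: "i \<in> {1..n-1} \<Longrightarrow> T i * t (i+1) = t i * T i + corr phi r q u t (i+1)"
  and T_t_self: "i \<in> {1..n-1} \<Longrightarrow> T i * t i = t (i+1) * T i - corr phi r q u t (i+1)"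
proof -
  assume "i \<in> {1..n-1}"
  then have "i + 1 \<in> {2..n}" by auto
  then have "T (i+1-1) * t (i+1) = t (i+1-1) * T (i+1-1) + corr phi r q u t (i+1)"
    "T (i+1-1) * t (i+1-1) = t (i+1) * T (i+1-1) - corr phi r q u t (i+1)"
    using relations unfolding shoji_rels_def by blast+
  then show "T i * t (i+1) = t i * T i + corr phi r q u t (i+1)"
    "T i * t i = t (i+1) * T i - corr phi r q u t (i+1)"
    by simp_all
qed

lemma Delta_dvd_one: "Delta r u dvd 1"
  using Delta_invertible unfolding invertible_R_def by (metis dvdI)

definition lam :: 'a where
  "lam = phi (q - rinv q)"

lemma T_square: "i \<in> {1..n-1} \<Longrightarrow> T i * T i = lam * T i + 1"
proof -
  assume "i \<in> {1..n-1}"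
  then have "(T i - phi q) * (T i + phi (rinv q)) = 0" by (rule T_quadratic)
  moreover have "phi q * phi (rinv q) = 1"
    using q_invertible mult_rinv[of q] unfolding invertible_R_def by (metis dvdI phi_1 phi_mult)
  ultimately show ?thesis
    by (simp add: lam_def phi_diff algebra_simps phi_commute[of "rinv q"])
qed

definition idem :: "nat \<Rightarrow> nat \<Rightarrow> 'a" where
  "idem i c = peval phi (lagrange_basis r u c) (t i)"

lemma idem_eq_prod_list:
  "idem i c = prod_list (map (\<lambda>j. (t i - phi (u j)) * phi (rinv (u c - u j)))
     (filter (\<lambda>j. j \<noteq> c) [1..<r+1]))"
proof -
  have "{1..r} - {c} = set (filter (\<lambda>j. j \<noteq> c) [1..<r+1])" by auto
  then have "lagrange_basis r u c
      = prod_list (map (\<lambda>j. smult (rinv (u c - u j)) [:- u j, 1:]) (filter (\<lambda>j. j \<noteq> c) [1..<r+1]))"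
    unfolding lagrange_basis_def by (simp only: prod.distinct_set_conv_list distinct_filter distinct_upt)
  then show ?thesis
    unfolding idem_def
    by (simp only: peval_prod_list, intro arg_cong[where f = prod_list] map_cong refl)
      (simp only: peval_smult peval_linear, rule phi_commute)
qed

lemma idem_commute: "z * t i = t i * z \<Longrightarrow> z * idem i c = idem i c * z"
  unfolding idem_def by (rule peval_intertwine)

lemma t_mult_idem:
  assumes "i \<in> {1..n}" "c \<in> {1..r}"
  shows "t i * idem i c = phi (u c) * idem i c"
proof -
  have "(\<Prod>j\<in>{1..r}. [:- u j, 1:]) = prod_list (map (\<lambda>j. [:- u j, 1:]) [1..<r+1])"
    by (metis atLeastLessThanSuc_atLeastAtMost distinct_upt prod.distinct_set_conv_list set_upt Suc_eq_plus1)
  then have "peval phi (\<Prod>j\<in>{1..r}. [:- u j, 1:]) (t i) = 0"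
    using t_annihilated[OF assms(1)] by (simp add: peval_prod_list peval_linear)
  then have "peval phi ([:- u c, 1:] * lagrange_basis r u c) (t i) = 0"
    by (simp only: linear_factor_mult_lagrange_basis[OF assms(2)] peval_smult mult_zero_right)
  then have "(t i - phi (u c)) * idem i c = 0"
    by (simp only: peval_mult peval_linear idem_def)
  then show ?thesis
    by (simp add: left_diff_distrib)
qed

lemma idem_mult_idem:
  assumes "i \<in> {1..n}" "c \<in> {1..r}" "d \<in> {1..r}"
  shows "idem i d * idem i c = (if d = c then idem i c else 0)"
  using peval_eigen[OF t_mult_idem[OF assms(1,2)], of "lagrange_basis r u d"] assms
  by (simp add: idem_def[of i d] poly_lagrange_basis[OF Delta_dvd_one])

lemma sum_idem: "(\<Sum>c\<in>{1..r}. idem i c) = 1"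
  unfolding idem_def peval_sum[symmetric] sum_lagrange_basis[OF Delta_dvd_one r_ge_1] by simp

lemma corr_eq_sum_idem:
  "corr phi r q u t j = (\<Sum>c1\<in>{1..r}. \<Sum>c2\<in>{c1<..r}.
      phi ((u c2 - u c1) * (q - rinv q)) * idem (j-1) c1 * idem j c2)"
  unfolding corr_def
proof (intro sum.cong refl)
  fix c1 c2 assume "c1 \<in> {1..r}" "c2 \<in> {c1<..r}"
  then have "peval phi (Fpoly r u c) (t i) = phi (Delta r u) * idem i c" if "c \<in> {c1, c2}" for c i
    using that by (auto simp: Fpoly_eq_smult_lagrange_basis[OF Delta_dvd_one] peval_smult idem_def)
  then have F: "peval phi (Fpoly r u c1) (t i) = phi (Delta r u) * idem i c1"
    "peval phi (Fpoly r u c2) (t i) = phi (Delta r u) * idem i c2" for i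
    by simp_all
  have "(Delta r u)^2 * rinv ((Delta r u)^2) = 1"
    using Delta_dvd_one by (intro mult_rinv) (simp add: power2_eq_square mult_dvd_mono[of _ 1 _ 1, simplified])
  moreover have "rinv ((Delta r u)^2) * (u c2 - u c1) * (q - rinv q) * Delta r u * Delta r u
      = ((Delta r u)^2 * rinv ((Delta r u)^2)) * ((u c2 - u c1) * (q - rinv q))"
    by (simp add: power2_eq_square ac_simps)
  ultimately have "phi (rinv ((Delta r u)^2) * (u c2 - u c1) * (q - rinv q)) * phi (Delta r u) * phi (Delta r u)
      = phi ((u c2 - u c1) * (q - rinv q))"
    by (simp only: phi_mult[symmetric] mult_1_left)
  then show "phi (rinv ((Delta r u)^2) * (u c2 - u c1) * (q - rinv q))
        * peval phi (Fpoly r u c1) (t (j - 1)) * peval phi (Fpoly r u c2) (t j)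
      = phi ((u c2 - u c1) * (q - rinv q)) * idem (j-1) c1 * idem j c2"
    by (simp only: F mult.assoc mult_phi_left_commute[of "idem (j-1) c1" "Delta r u"])
      (simp flip: mult.assoc)
qed

lemma t_idem_commute: "\<lbrakk>i \<in> {1..n}; j \<in> {1..n}\<rbrakk> \<Longrightarrow> t j * idem i c = idem i c * t j"
  by (rule idem_commute) (simp add: t_commute)

lemma idem_idem_commute: "\<lbrakk>i \<in> {1..n}; j \<in> {1..n}\<rbrakk> \<Longrightarrow> idem j d * idem i c = idem i c * idem j d"
  by (rule idem_commute) (simp add: t_idem_commute)

definition labels :: "(nat \<Rightarrow> nat) set" where
  "labels = PiE {1..n} (\<lambda>_. {1..r})"

definition idem_prod :: "(nat \<Rightarrow> nat) \<Rightarrow> nat list \<Rightarrow> 'a" where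
  "idem_prod k xs = prod_list (map (\<lambda>i. idem i (k i)) xs)"

text \<open>\<open>blk k\<close> is the paper's \<open>b_k\<close>, the projection onto the joint eigenspace on which
  each \<open>t_i\<close> acts as \<open>u_(k_i)\<close>.\<close>

definition blk :: "(nat \<Rightarrow> nat) \<Rightarrow> 'a" where
  "blk k = idem_prod k [1..<n+1]"

lemma bk_eq_blk: "bk phi n r u t k = blk k"
  unfolding bk_def blk_def idem_prod_def idem_eq_prod_list by simp

lemma finite_labels: "finite labels"
  unfolding labels_def by (simp add: finite_PiE)

lemma idem_prod_commute:
  assumes "\<And>i. i \<in> set xs \<Longrightarrow> z * idem i (k i) = idem i (k i) * z"
  shows "z * idem_prod k xs = idem_prod k xs * z"
  unfolding idem_prod_def using assms by (intro mult_prod_list_commute) auto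

lemma blk_commute:
  assumes "\<And>i. i \<in> {1..n} \<Longrightarrow> z * idem i (k i) = idem i (k i) * z"
  shows "z * blk k = blk k * z"
  unfolding blk_def using assms by (intro idem_prod_commute) auto

lemma t_blk_commute: "j \<in> {1..n} \<Longrightarrow> t j * blk k = blk k * t j"
  by (rule blk_commute) (simp add: t_idem_commute)

lemma idem_blk_commute: "j \<in> {1..n} \<Longrightarrow> idem j c * blk k = blk k * idem j c"
  by (rule blk_commute) (simp add: idem_idem_commute)

lemma idem_prod_mult_idem:
  assumes "k \<in> labels" "m \<in> set xs" "distinct xs" "set xs \<subseteq> {1..n}" "c \<in> {1..r}"
  shows "idem_prod k xs * idem m c = (if k m = c then idem_prod k xs else 0)"
  using assms(2-4)
proof (induction xs)
  case (Cons y ys)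
  have km: "k m \<in> {1..r}" "m \<in> {1..n}" using assms(1) Cons.prems unfolding labels_def by auto
  have "idem_prod k (y # ys) * idem m c = idem y (k y) * (idem_prod k ys * idem m c)"
    unfolding idem_prod_def by (simp add: mult.assoc)
  also have "\<dots> = (if k m = c then idem_prod k (y # ys) else 0)"
  proof (cases "y = m")
    case True
    have "idem_prod k ys * idem m c = idem m c * idem_prod k ys"
      using Cons.prems km by (intro idem_prod_commute[symmetric]) (auto simp: idem_idem_commute)
    then show ?thesis
      using True km assms(5) by (simp add: idem_mult_idem idem_prod_def flip: mult.assoc)
  qed (use Cons in \<open>simp add: idem_prod_def\<close>)
  finally show ?case .
qed simp

lemma blk_mult_idem:
  "\<lbrakk>k \<in> labels; m \<in> {1..n}; c \<in> {1..r}\<rbrakk> \<Longrightarrow> blk k * idem m c = (if k m = c then blk k else 0)"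
  unfolding blk_def by (rule idem_prod_mult_idem) auto

lemma blk_mult_idem_prod:
  assumes "k' \<in> labels" "set xs \<subseteq> {1..n}" "\<forall>i\<in>set xs. k i \<in> {1..r}"
  shows "blk k' * idem_prod k xs = (if \<forall>i\<in>set xs. k' i = k i then blk k' else 0)"
  using assms(2,3)
proof (induction xs rule: rev_induct)
  case (snoc y ys)
  have "blk k' * idem_prod k (ys @ [y]) = (blk k' * idem_prod k ys) * idem y (k y)"
    unfolding idem_prod_def by (simp add: mult.assoc)
  with snoc show ?case by (auto simp: blk_mult_idem[OF assms(1)])
qed (simp add: idem_prod_def)

lemma blk_mult_blk:
  assumes "k' \<in> labels" "k \<in> labels"
  shows "blk k' * blk k = (if k' = k then blk k else 0)"
proof -
  have "blk k' * blk k = (if \<forall>i\<in>set [1..<n+1]. k' i = k i then blk k' else 0)"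
    unfolding blk_def[of k] using assms(2)
    by (intro blk_mult_idem_prod[OF assms(1)]) (auto simp: labels_def)
  moreover have "set [1..<n+1] = {1..n}" by auto
  moreover have "(\<forall>i\<in>{1..n}. k' i = k i) \<longleftrightarrow> k' = k"
    using assms unfolding labels_def by (metis PiE_ext)
  ultimately show ?thesis by auto
qed

lemma sum_idem_prod: "(\<Sum>k\<in>PiE {1..N} (\<lambda>_. {1..r}). idem_prod k [1..<N+1]) = 1"
proof (induction N)
  case (Suc N)
  have "{1..Suc N} = insert (Suc N) {1..N}" by auto
  then have "(\<Sum>k\<in>PiE {1..Suc N} (\<lambda>_. {1..r}). idem_prod k [1..<Suc N+1])
     = (\<Sum>(y, g)\<in>{1..r} \<times> PiE {1..N} (\<lambda>_. {1..r}). idem_prod (g(Suc N := y)) [1..<Suc N+1])"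
    by (simp only: PiE_insert_eq, subst sum.reindex)
      (auto intro!: inj_combinator simp: o_def case_prod_beta)
  also have "\<dots> = (\<Sum>y\<in>{1..r}. \<Sum>g\<in>PiE {1..N} (\<lambda>_. {1..r}). idem_prod g [1..<N+1] * idem (Suc N) y)"
    unfolding sum.cartesian_product[symmetric]
  proof (intro sum.cong refl)
    fix y g
    have "map (\<lambda>i. idem i ((g(Suc N := y)) i)) [1..<N+1] = map (\<lambda>i. idem i (g i)) [1..<N+1]"
      by auto
    moreover have "[1..<Suc N+1] = [1..<N+1] @ [Suc N]" by simp
    ultimately show "idem_prod (g(Suc N := y)) [1..<Suc N+1] = idem_prod g [1..<N+1] * idem (Suc N) y"
      unfolding idem_prod_def by (simp only: map_append prod_list.append) simp
  qed
  also have "\<dots> = 1"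
    by (simp only: sum_distrib_right[symmetric] Suc.IH mult_1_left sum_idem)
  finally show ?case .
qed (simp add: idem_prod_def)

lemma sum_blk: "(\<Sum>k\<in>labels. blk k) = 1"
  unfolding labels_def blk_def by (rule sum_idem_prod)

lemma eq_by_blocks:
  assumes "\<And>k. k \<in> labels \<Longrightarrow> x * blk k = y * blk k"
  shows "x = y"
proof -
  have "x = (\<Sum>k\<in>labels. x * blk k)" by (simp flip: sum_distrib_left add: sum_blk)
  also have "\<dots> = (\<Sum>k\<in>labels. y * blk k)" by (simp add: assms)
  also have "\<dots> = y" by (simp flip: sum_distrib_left add: sum_blk)
  finally show ?thesis .
qed

lemma label_range: "\<lbrakk>k \<in> labels; m \<in> {1..n}\<rbrakk> \<Longrightarrow> k m \<in> {1..r}"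
  unfolding labels_def by auto

lemma t_mult_blk:
  assumes "k \<in> labels" "m \<in> {1..n}"
  shows "t m * blk k = phi (u (k m)) * blk k"
proof -
  note km = label_range[OF assms] and e = blk_mult_idem[OF assms km, simplified]
  have "t m * blk k = blk k * (t m * idem m (k m))"
    by (subst e[symmetric]) (simp add: t_blk_commute[OF assms(2)] flip: mult.assoc)
  also have "\<dots> = phi (u (k m)) * blk k"
    by (simp add: t_mult_idem[OF assms(2) km] mult_phi_left_commute e)
  finally show ?thesis .
qed

subsection \<open>The generators \<open>g_i\<close> permute the blocks\<close>

abbreviation g :: "nat \<Rightarrow> 'a" where
  "g i \<equiv> gen phi n r q u t T i"

abbreviation B :: "nat \<Rightarrow> 'a" where
  "B i \<equiv> Bp phi n r q u t i (i + 1)"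

lemma g_eq: "g i = T i + B i"
  unfolding gen_def ..

text \<open>\<open>T_i - g_i\<close> acts on \<open>b_k\<close> as \<open>offset i k\<close>; writing it as a value of \<open>phi\<close> makes it
  central by \<open>mult_phi_left_commute\<close>.\<close>

definition offset :: "nat \<Rightarrow> (nat \<Rightarrow> nat) \<Rightarrow> 'a" where
  "offset i k = phi (if k i < k (i+1) then q - rinv q else 0)"

lemma offset_eq: "offset i k = (if k i < k (i+1) then lam else 0)"
  by (simp add: offset_def lam_def)

lemma mult_offset_left_commute: "z * (offset i k * w) = offset i k * (z * w)"
  unfolding offset_def by (rule mult_phi_left_commute)

lemma B_mult_blk:
  assumes "k \<in> labels"
  shows "B i * blk k = - (offset i k * blk k)"
proof -
  have "B i * blk k = phi (- (q - rinv q)) * (\<Sum>k'\<in>{k'\<in>labels. k' i < k' (i+1)}. blk k' * blk k)"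
    unfolding Bp_def bk_eq_blk labels_def[symmetric] by (simp add: sum_distrib_right mult.assoc)
  also have "(\<Sum>k'\<in>{k'\<in>labels. k' i < k' (i+1)}. blk k' * blk k)
      = (\<Sum>k'\<in>{k'\<in>labels. k' i < k' (i+1)}. if k' = k then blk k else 0)"
    by (intro sum.cong refl) (simp add: blk_mult_blk assms)
  also have "\<dots> = (if k i < k (i+1) then blk k else 0)"
    using finite_labels assms by (simp add: sum.delta')
  finally show ?thesis by (simp add: offset_eq lam_def phi_diff left_diff_distrib)
qed

lemma B_t_commute:
  assumes "m \<in> {1..n}"
  shows "B i * t m = t m * B i"
proof -
  have "t m * (\<Sum>k\<in>{k\<in>labels. k i < k (i+1)}. blk k) = (\<Sum>k\<in>{k\<in>labels. k i < k (i+1)}. blk k) * t m"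
    by (rule mult_sum_commute) (simp add: t_blk_commute[OF assms])
  then show ?thesis
    unfolding Bp_def bk_eq_blk labels_def[symmetric] by (simp add: mult.assoc mult_phi_left_commute)
qed

lemma idem_idem_mult_blk:
  assumes "k \<in> labels" "i \<in> {1..n}" "j \<in> {1..n}" "c \<in> {1..r}" "d \<in> {1..r}"
  shows "idem i c * idem j d * blk k = (if c = k i \<and> d = k j then blk k else 0)"
proof -
  have "idem i c * idem j d * blk k = blk k * idem i c * idem j d"
    using assms(2,3) by (simp add: idem_blk_commute mult.assoc flip: idem_blk_commute)
  then show ?thesis using assms by (auto simp: blk_mult_idem)
qed

lemma corr_mult_blk:
  assumes k: "k \<in> labels" and i: "i \<in> {1..n-1}"
  shows "corr phi r q u t (i+1) * blk k = offset i k * ((phi (u (k (i+1))) - phi (u (k i))) * blk k)"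
proof -
  have ki: "k i \<in> {1..r}" "k (i+1) \<in> {1..r}" using label_range[OF k, of i] label_range[OF k, of "i+1"] i by auto
  let ?X = "phi ((u (k (i+1)) - u (k i)) * (q - rinv q)) * blk k"
  have "corr phi r q u t (i+1) * blk k = (\<Sum>c1\<in>{1..r}. \<Sum>c2\<in>{c1<..r}.
      phi ((u c2 - u c1) * (q - rinv q)) * (idem i c1 * idem (i+1) c2 * blk k))"
    unfolding corr_eq_sum_idem by (simp add: sum_distrib_right mult.assoc)
  also have "\<dots> = (\<Sum>c1\<in>{1..r}. \<Sum>c2\<in>{c1<..r}. if c1 = k i then (if c2 = k (i+1) then ?X else 0) else 0)"
  proof (intro sum.cong refl)
    fix c1 c2 assume "c1 \<in> {1..r}" "c2 \<in> {c1<..r}"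
    then have "idem i c1 * idem (i+1) c2 * blk k = (if c1 = k i \<and> c2 = k (i+1) then blk k else 0)"
      using k i by (intro idem_idem_mult_blk) auto
    then show "phi ((u c2 - u c1) * (q - rinv q)) * (idem i c1 * idem (i+1) c2 * blk k)
        = (if c1 = k i then (if c2 = k (i+1) then ?X else 0) else 0)"
      by simp
  qed
  also have "\<dots> = (\<Sum>c1\<in>{1..r}. if c1 = k i then (\<Sum>c2\<in>{c1<..r}. if c2 = k (i+1) then ?X else 0) else 0)"
    by (rule sum.cong) auto
  also have "\<dots> = (if k i < k (i+1) then ?X else 0)"
    using ki by (simp add: sum.delta)
  also have "?X = lam * ((phi (u (k (i+1))) - phi (u (k i))) * blk k)"
    by (simp only: lam_def mult.commute[of "u (k (i+1)) - u (k i)"] phi_mult phi_diff mult.assoc)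
  finally show ?thesis
    by (simp add: offset_eq)
qed

lemma g_t_succ:
  assumes i: "i \<in> {1..n-1}"
  shows "g i * t (i+1) = t i * g i"
proof (rule eq_by_blocks)
  fix k assume k: "k \<in> labels"
  have m: "i \<in> {1..n}" "i+1 \<in> {1..n}" using i by auto
  let ?a = "phi (u (k i))" and ?b = "phi (u (k (i+1)))"
  have "g i * t (i+1) * blk k
      = t i * (T i * blk k) + corr phi r q u t (i+1) * blk k + B i * (t (i+1) * blk k)"
    by (simp only: g_eq distrib_right T_t_succ[OF i] mult.assoc)
  also have "\<dots> = t i * (T i * blk k) + offset i k * ((?b - ?a) * blk k) + ?b * - (offset i k * blk k)"
    by (simp only: corr_mult_blk[OF k i] t_mult_blk[OF k m(2)] mult_phi_left_commute[of "B i"]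
        B_mult_blk[OF k])
  also have "\<dots> = t i * (T i * blk k) + ?a * - (offset i k * blk k)"
    by (simp add: algebra_simps mult_offset_left_commute)
  also have "\<dots> = t i * g i * blk k"
    by (simp only: g_eq distrib_left distrib_right mult.assoc B_mult_blk[OF k] mult_minus_right
        mult_offset_left_commute[of "t i"] t_mult_blk[OF k m(1)] mult_phi_left_commute[of "offset i k"])
  finally show "g i * t (i+1) * blk k = t i * g i * blk k" .
qed

lemma g_t_self:
  assumes i: "i \<in> {1..n-1}"
  shows "g i * t i = t (i+1) * g i"
proof (rule eq_by_blocks)
  fix k assume k: "k \<in> labels"
  have m: "i \<in> {1..n}" "i+1 \<in> {1..n}" using i by auto
  let ?a = "phi (u (k i))" and ?b = "phi (u (k (i+1)))"
  have "g i * t i * blk k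
      = t (i+1) * (T i * blk k) - corr phi r q u t (i+1) * blk k + B i * (t i * blk k)"
    by (simp only: g_eq distrib_right left_diff_distrib T_t_self[OF i] mult.assoc)
  also have "\<dots> = t (i+1) * (T i * blk k) - offset i k * ((?b - ?a) * blk k) + ?a * - (offset i k * blk k)"
    by (simp only: corr_mult_blk[OF k i] t_mult_blk[OF k m(1)] mult_phi_left_commute[of "B i"]
        B_mult_blk[OF k])
  also have "\<dots> = t (i+1) * (T i * blk k) + ?b * - (offset i k * blk k)"
    by (simp add: algebra_simps mult_offset_left_commute)
  also have "\<dots> = t (i+1) * g i * blk k"
    by (simp only: g_eq distrib_left distrib_right mult.assoc B_mult_blk[OF k] mult_minus_right
        mult_offset_left_commute[of "t (i+1)"] t_mult_blk[OF k m(2)] mult_phi_left_commute[of "offset i k"])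
  finally show "g i * t i * blk k = t (i+1) * g i * blk k" .
qed

lemma g_t_commute:
  assumes "i \<in> {1..n-1}" "m \<in> {1..n}" "m \<noteq> i" "m \<noteq> i + 1"
  shows "g i * t m = t m * g i"
  by (simp only: g_eq distrib_left distrib_right T_t_commute[OF assms] B_t_commute[OF assms(2)])

lemma g_idem:
  assumes "i \<in> {1..n-1}" "m \<in> {1..n}"
  shows "g i * idem m c = idem (transpose i (i+1) m) c * g i"
proof -
  have "g i * t m = t (transpose i (i+1) m) * g i"
    using assms g_t_succ g_t_self g_t_commute by (cases "m = i"; cases "m = i + 1") auto
  then show ?thesis
    unfolding idem_def by (rule peval_intertwine)
qed

lemma g_idem_prod:
  assumes "i \<in> {1..n-1}" "set xs \<subseteq> {1..n}"
  shows "g i * idem_prod k xs = prod_list (map (\<lambda>m. idem (transpose i (i+1) m) (k m)) xs) * g i"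
  using assms(2)
proof (induction xs)
  case (Cons m xs)
  have "g i * idem_prod k (m # xs) = (g i * idem m (k m)) * idem_prod k xs"
    by (simp add: idem_prod_def mult.assoc)
  also have "\<dots> = idem (transpose i (i+1) m) (k m) * (g i * idem_prod k xs)"
    using Cons.prems assms(1) by (simp add: g_idem mult.assoc)
  finally show ?case
    using Cons by (simp add: mult.assoc)
qed (simp add: idem_prod_def)

lemma transpose_label:
  "\<lbrakk>k \<in> labels; i \<in> {1..n-1}\<rbrakk> \<Longrightarrow> k \<circ> transpose i (i+1) \<in> labels"
  unfolding labels_def PiE_def Pi_def extensional_def by (auto simp: transpose_def)

lemma g_mult_blk:
  assumes k: "k \<in> labels" and i: "i \<in> {1..n-1}"
  shows "g i * blk k = blk (k \<circ> transpose i (i+1)) * g i"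
proof -
  let ?\<tau> = "transpose i (i+1)"
  have "g i * blk k = prod_list (map (\<lambda>m. idem (?\<tau> m) (k m)) [1..<n+1]) * g i"
    unfolding blk_def using i by (intro g_idem_prod) auto
  also have "prod_list (map (\<lambda>m. idem (?\<tau> m) (k m)) [1..<n+1]) = blk (k \<circ> ?\<tau>)"
  proof -
    have split: "[1..<n+1] = [1..<i] @ [i, i+1] @ [i+2..<n+1]"
      using i by (intro upt_split_adjacent) auto
    have outside: "map (\<lambda>m. idem (?\<tau> m) (k m)) xs = map (\<lambda>m. idem m ((k \<circ> ?\<tau>) m)) xs"
      if "i \<notin> set xs" "i + 1 \<notin> set xs" for xs
      using that by (intro map_cong) (auto simp: transpose_def)
    have below: "map (\<lambda>m. idem (?\<tau> m) (k m)) [1..<i] = map (\<lambda>m. idem m ((k \<circ> ?\<tau>) m)) [1..<i]"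
      and above: "map (\<lambda>m. idem (?\<tau> m) (k m)) [i+2..<n+1] = map (\<lambda>m. idem m ((k \<circ> ?\<tau>) m)) [i+2..<n+1]"
      by (rule outside; simp)+
    have swap: "idem (i+1) (k i) * idem i (k (i+1)) = idem i (k (i+1)) * idem (i+1) (k i)"
      using i by (intro idem_idem_commute) auto
    show ?thesis
      unfolding blk_def idem_prod_def split map_append prod_list.append below above
      by (simp only: list.map prod_list.Cons prod_list.Nil mult_1_right comp_apply
          transpose_apply_first transpose_apply_second swap)
  qed
  finally show ?thesis .
qed

subsection \<open>Braid and commutation relations block by block\<close>

lemma T_mult_blk: "k \<in> labels \<Longrightarrow> T i * blk k = g i * blk k + offset i k * blk k"
  by (simp only: g_eq distrib_right B_mult_blk) simp

lemma T_mult_blk_mult: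
  "k \<in> labels \<Longrightarrow> T m * (blk k * y) = g m * (blk k * y) + offset m k * (blk k * y)"
  by (simp only: mult.assoc[symmetric] T_mult_blk distrib_right)

lemma T_mult_g_blk:
  assumes k: "k \<in> labels" and j: "j \<in> {1..n-1}"
  shows "T m * (g j * blk k)
    = g m * (g j * blk k) + offset m (k \<circ> transpose j (j+1)) * (g j * blk k)"
  unfolding g_mult_blk[OF k j] by (rule T_mult_blk_mult[OF transpose_label[OF k j]])

lemma T_mult_g_g_blk:
  assumes k: "k \<in> labels" and j1: "j1 \<in> {1..n-1}" and j2: "j2 \<in> {1..n-1}"
  shows "T m * (g j1 * (g j2 * blk k)) = g m * (g j1 * (g j2 * blk k))
    + offset m (k \<circ> transpose j2 (j2+1) \<circ> transpose j1 (j1+1)) * (g j1 * (g j2 * blk k))"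
proof -
  have k': "k \<circ> transpose j2 (j2+1) \<in> labels" by (rule transpose_label[OF k j2])
  have "g j1 * (g j2 * blk k) = blk (k \<circ> transpose j2 (j2+1) \<circ> transpose j1 (j1+1)) * (g j1 * g j2)"
    by (simp only: g_mult_blk[OF k j2] g_mult_blk[OF k' j1] mult.assoc[symmetric])
  then show ?thesis
    by (simp only: T_mult_blk_mult[OF transpose_label[OF k' j1]])
qed

lemma g_square_blk:
  assumes k: "k \<in> labels" and i: "i \<in> {1..n-1}"
  shows "g i * (g i * blk k) = (if k i = k (i+1) then lam else 0) * (g i * blk k) + blk k"
proof -
  have "T i * (T i * blk k) = lam * (T i * blk k) + blk k"
    using T_square[OF i] by (simp only: mult.assoc[symmetric] distrib_right mult_1_left)
  then have expand: "g i * (g i * blk k) + offset i (k \<circ> transpose i (i+1)) * (g i * blk k)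
      + (offset i k * (g i * blk k) + offset i k * (offset i k * blk k))
      = lam * (g i * blk k + offset i k * blk k) + blk k"
    by (simp only: T_mult_blk[OF k] distrib_left T_mult_g_blk[OF k i] mult_offset_left_commute[of "T i"])
  have "offset i (k \<circ> transpose i (i+1)) = (if k (i+1) < k i then lam else 0)"
    by (simp add: offset_eq)
  with expand show ?thesis
    by (cases "k i < k (i+1)"; cases "k (i+1) < k i") (simp_all add: offset_eq algebra_simps)
qed

lemma g_far_commute:
  assumes i: "i \<in> {1..n-1}" and j: "j \<in> {1..n-1}" and far: "i > j + 1 \<or> j > i + 1"
  shows "g i * g j = g j * g i"
proof (rule eq_by_blocks)
  fix k assume k: "k \<in> labels"
  have "offset i (k \<circ> transpose j (j+1)) = offset i k" "offset j (k \<circ> transpose i (i+1)) = offset j k"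
    using far by (auto simp: offset_def transpose_def)
  then have "T i * (T j * blk k) = g i * (g j * blk k) + offset i k * (g j * blk k)
        + (offset j k * (g i * blk k) + offset j k * (offset i k * blk k))"
    and "T j * (T i * blk k) = g j * (g i * blk k) + offset j k * (g i * blk k)
        + (offset i k * (g j * blk k) + offset i k * (offset j k * blk k))"
    by (simp only: T_mult_blk[OF k] distrib_left T_mult_g_blk[OF k i] T_mult_g_blk[OF k j]
        mult_offset_left_commute[of "T _"])+
  moreover have "T i * (T j * blk k) = T j * (T i * blk k)"
    using T_far_commute[OF i j far] by (simp flip: mult.assoc)
  moreover have "offset j k * (offset i k * blk k) = offset i k * (offset j k * blk k)"
    by (rule mult_offset_left_commute)
  ultimately have "g i * (g j * blk k) = g j * (g i * blk k)"
    by (simp add: algebra_simps)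
  then show "g i * g j * blk k = g j * g i * blk k"
    by (simp add: mult.assoc)
qed

lemma g_braid:
  assumes i: "i \<in> {1..n-2}"
  shows "g i * g (i+1) * g i = g (i+1) * g i * g (i+1)"
proof (rule eq_by_blocks)
  fix k assume k: "k \<in> labels"
  have i1: "i \<in> {1..n-1}" and i2: "i+1 \<in> {1..n-1}" using i by auto
  have L: "T i * (T (i+1) * (T i * blk k)) =
     g i * (g (i+1) * (g i * blk k)) + offset i (k \<circ> transpose i (i+1) \<circ> transpose (i+1) (i+1+1)) * (g (i+1) * (g i * blk k))
     + offset (i+1) (k \<circ> transpose i (i+1)) * ((if k i = k (i+1) then lam else 0) * (g i * blk k) + blk k
         + offset i (k \<circ> transpose i (i+1)) * (g i * blk k))
     + (offset i k * (g i * (g (i+1) * blk k) + offset i (k \<circ> transpose (i+1) (i+1+1)) * (g (i+1) * blk k))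
     + offset i k * (offset (i+1) k * (g i * blk k + offset i k * blk k)))"
    by (simp only: T_mult_blk[OF k] distrib_left T_mult_g_blk[OF k i1] T_mult_g_blk[OF k i2]
        T_mult_g_g_blk[OF k i2 i1] mult_offset_left_commute[of "T _"] g_square_blk[OF k i1] add.assoc)
  have R: "T (i+1) * (T i * (T (i+1) * blk k)) =
     g (i+1) * (g i * (g (i+1) * blk k)) + offset (i+1) (k \<circ> transpose (i+1) (i+1+1) \<circ> transpose i (i+1)) * (g i * (g (i+1) * blk k))
     + offset i (k \<circ> transpose (i+1) (i+1+1)) * ((if k (i+1) = k (i+1+1) then lam else 0) * (g (i+1) * blk k) + blk k
         + offset (i+1) (k \<circ> transpose (i+1) (i+1+1)) * (g (i+1) * blk k))
     + (offset (i+1) k * (g (i+1) * (g i * blk k) + offset (i+1) (k \<circ> transpose i (i+1)) * (g i * blk k))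
     + offset (i+1) k * (offset i k * (g (i+1) * blk k + offset (i+1) k * blk k)))"
    by (simp only: T_mult_blk[OF k] distrib_left T_mult_g_blk[OF k i1] T_mult_g_blk[OF k i2]
        T_mult_g_g_blk[OF k i1 i2] mult_offset_left_commute[of "T _"] g_square_blk[OF k i2] add.assoc)
  have LR: "T i * (T (i+1) * (T i * blk k)) = T (i+1) * (T i * (T (i+1) * blk k))"
    using T_braid[OF i] by (simp flip: mult.assoc)
  have offsets: "offset i k = (if k i < k (i+1) then lam else 0)"
    "offset (i+1) k = (if k (i+1) < k (i+2) then lam else 0)"
    "offset i (k \<circ> transpose i (i+1)) = (if k (i+1) < k i then lam else 0)"
    "offset (i+1) (k \<circ> transpose i (i+1)) = (if k i < k (i+2) then lam else 0)"
    "offset i (k \<circ> transpose (i+1) (i+1+1)) = (if k i < k (i+2) then lam else 0)"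
    "offset (i+1) (k \<circ> transpose (i+1) (i+1+1)) = (if k (i+2) < k (i+1) then lam else 0)"
    "offset i (k \<circ> transpose i (i+1) \<circ> transpose (i+1) (i+1+1)) = (if k (i+1) < k (i+2) then lam else 0)"
    "offset (i+1) (k \<circ> transpose (i+1) (i+1+1) \<circ> transpose i (i+1)) = (if k i < k (i+1) then lam else 0)"
    and index: "k (i+1+1) = k (i+2)"
    by (simp_all add: offset_eq transpose_def)
  have "g i * (g (i+1) * (g i * blk k)) - g (i+1) * (g i * (g (i+1) * blk k)) = 0"
    by (rule braid_expansion_cancel[OF LR[unfolded L R offsets index]])
  then show "g i * g (i+1) * g i * blk k = g (i+1) * g i * g (i+1) * blk k"
    by (simp add: mult.assoc)
qed

end

theorem proposition3p6:
  fixes phi :: "'r::idom \<Rightarrow> 'a::ring_1"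
    and n r :: nat and q :: 'r and u :: "nat \<Rightarrow> 'r"
    and t T :: "nat \<Rightarrow> 'a"
  assumes "n \<ge> 2" and "r \<ge> 1"
    and "invertible_R q" and "invertible_R (Delta r u)"
    and "alg_struct phi"
    and "shoji_rels phi n r q u t T"
  shows "(\<forall>i\<in>{1..n-1}. \<forall>j\<in>{1..n-1}. (i > j + 1 \<or> j > i + 1) \<longrightarrow>
            gen phi n r q u t T i * gen phi n r q u t T j = gen phi n r q u t T j * gen phi n r q u t T i)
       \<and> (\<forall>i\<in>{1..n-2}. gen phi n r q u t T i * gen phi n r q u t T (i+1) * gen phi n r q u t T i
            = gen phi n r q u t T (i+1) * gen phi n r q u t T i * gen phi n r q u t T (i+1))"
proof -
  interpret shoji_algebra phi n r q u t T
    using assms by unfold_locales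
  show ?thesis
    using g_far_commute g_braid by blast
qed

end
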